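(* Let $p\in(1,5)$ and consider the third-order ordinary differential equation $\mathcal{L}u=0$ on $\mathbb{R}$, where $\mathcal{L}=\partial_x(-\partial_x^2+1-p\,\phi^{p-1})$. Its space of solutions is spanned by $\{\phi',h_2,h_3\}$, where $h_2,h_3$ are even functions satisfying $\lim_{x\to+\infty}h_2(x)=1$ and $\lim_{x\to+\infty}h_3(x)=\infty$. In particular, there is no solution $u$ of $\mathcal{L}u=0$ with $\lim_{x\to-\infty}u(x)=1$ and $\lim_{x\to+\infty}|u(x)|=\infty$.
   Context: $\phi(x)=\left(\frac{p+1}{2}\right)^{\frac1{p-1}}\mathrm{sech}^{\frac2{p-1}}\left(\frac{p-1}2x\right)$. *)

theory Defs
  imports "HOL-Analysis.Analysis"
begin

definition sech :: "real \<Rightarrow> real" where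
  "sech x = 1 / cosh x"

definition phi :: "real \<Rightarrow> real \<Rightarrow> real" where
  "phi p x = ((p + 1) / 2) powr (1 / (p - 1)) * (sech ((p - 1) / 2 * x)) powr (2 / (p - 1))"

definition Lsol :: "real \<Rightarrow> (real \<Rightarrow> real) \<Rightarrow> bool" where
  "Lsol p u \<longleftrightarrow>
     (\<forall>x. u differentiable at x) \<and>
     (\<forall>x. deriv u differentiable at x) \<and>
     (\<forall>x. deriv (deriv u) differentiable at x) \<and>
     (\<forall>x. ((\<lambda>y. - deriv (deriv u) y + u y - p * (phi p y) powr (p - 1) * u y)
             has_real_derivative 0) (at x))"

end

theory Submission
  imports Defs
begin

(* With beta = (p - 1)/2, alpha = 1/beta, C = cosh (beta x), S = sinh (beta x) and T = tanh (beta x)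
   we have phi = A C^(-alpha) and p phi^(p-1) = V = kappa (1 - T^2). Integrating L u = 0 once gives
   -u'' + (1 - V) u = c; as V is bounded, a Gronwall estimate on u^2 + u'^2 makes solutions unique
   given u(0), u'(0) and c, so the solution space is spanned by phi' (c = 0, odd) and two even
   solutions normalised at 0. These come from the family
     h_e = C^(-alpha) (T Psi_e - 1),   Psi_e' = beta (C^(2e) - 1) / S^2,   Psi_e(0) = 0,
   which satisfies h_e'' - (1 - V) h_e = 2 beta (e beta - 1 - beta) C^(2e-2-alpha): for
   e = (p+1)/(p-1) the right-hand side vanishes (h3 = h_e), for e = p/(p-1) it is the constant
   -beta (h2 = alpha h_e, with c = 1). By L'Hopital Psi_e ~ C^(2e-2)/(2e-2), hence h2 tends to 1
   and h3 to infinity at both ends. A solution tending to 1 at minus infinity thus has no h3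
   component and stays bounded at plus infinity. *)

lemma DERIV_interval_integral:
  fixes f :: "real \<Rightarrow> real" and c :: real
  assumes "continuous_on UNIV f"
  shows "((\<lambda>u. LBINT y=c..u. f y) has_real_derivative f x) (at x)"
proof -
  have "at x within {min c (x - 1)..max c (x + 1)} = at x"
    by (intro at_within_interior) auto
  then show ?thesis
    using interval_integral_FTC2[of "min c (x - 1)" c "max c (x + 1)" f x]
      continuous_on_subset[OF assms]
    by (auto simp: has_real_derivative_iff_has_vector_derivative)
qed

lemma DERIV_mult_vanishing:
  fixes f g :: "real \<Rightarrow> real"
  assumes "f a = 0" and "(f has_real_derivative D) (at a)" and "isCont g a"
  shows "((\<lambda>y. f y * g y) has_real_derivative D * g a) (at a)"
proof -
  have "((\<lambda>y. (f y - f a) / (y - a) * g y) \<longlongrightarrow> D * g a) (at a)"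
    using assms(2,3) by (intro tendsto_mult) (simp_all add: has_field_derivative_iff isCont_def)
  then show ?thesis
    using assms(1) by (simp add: has_field_derivative_iff)
qed

lemma antiderivative_of_even_is_odd:
  fixes f F :: "real \<Rightarrow> real"
  assumes "\<And>x. (F has_real_derivative f x) (at x)" and "\<And>x. f (- x) = f x" and "F 0 = 0"
  shows "F (- x) = - F x"
proof -
  have "((\<lambda>y. F y + F (- y)) has_real_derivative f y + f (- y) * (- 1)) (at y)" for y
    by (auto intro!: derivative_eq_intros assms(1) DERIV_chain2[of F])
  then have "((\<lambda>y. F y + F (- y)) has_real_derivative 0) (at y)" for y
    by (simp add: assms(2))
  then have "F x + F (- x) = F 0 + F (- 0)"
    using DERIV_isconst_all[of "\<lambda>y. F y + F (- y)" x 0] by blast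
  then show ?thesis
    using assms(3) by simp
qed

lemma gronwall_vanishing:
  fixes E E' :: "real \<Rightarrow> real"
  assumes deriv: "\<And>y. (E has_real_derivative E' y) (at y)"
    and bound: "\<And>y. \<bar>E' y\<bar> \<le> M * E y"
    and nonneg: "\<And>y. E y \<ge> 0" and "E a = 0"
  shows "E x = 0"
proof -
  have "E x \<le> 0"
  proof (cases "a \<le> x")
    case True
    define G where "G y = E y * exp (- M * (y - a))" for y
    have "G x \<le> G a"
    proof (rule DERIV_nonpos_imp_nonincreasing[OF True])
      fix y
      have "(G has_real_derivative (E' y - M * E y) * exp (- M * (y - a))) (at y)"
        unfolding G_def by (auto intro!: derivative_eq_intros deriv simp: algebra_simps)
      moreover have "(E' y - M * E y) * exp (- M * (y - a)) \<le> 0"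
        using bound[of y] by (intro mult_nonpos_nonneg) auto
      ultimately show "\<exists>d. (G has_real_derivative d) (at y) \<and> d \<le> 0" by blast
    qed
    then show ?thesis using True \<open>E a = 0\<close> by (simp add: G_def mult_le_0_iff)
  next
    case False
    define G where "G y = E y * exp (M * (y - a))" for y
    have "G x \<le> G a"
    proof (rule DERIV_nonneg_imp_nondecreasing[of x a G])
      show "x \<le> a" using False by simp
      fix y
      have "(G has_real_derivative (E' y + M * E y) * exp (M * (y - a))) (at y)"
        unfolding G_def by (auto intro!: derivative_eq_intros deriv simp: algebra_simps)
      moreover have "(E' y + M * E y) * exp (M * (y - a)) \<ge> 0"
        using bound[of y] by (intro mult_nonneg_nonneg) auto
      ultimately show "\<exists>d. (G has_real_derivative d) (at y) \<and> d \<ge> 0" by blast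
    qed
    then show ?thesis using False \<open>E a = 0\<close> by (simp add: G_def mult_le_0_iff)
  qed
  then show ?thesis
    using nonneg[of x] by simp
qed

lemma linear_ode2_vanishing:
  fixes w w' g :: "real \<Rightarrow> real"
  assumes "\<And>x. (w has_real_derivative w' x) (at x)"
    and "\<And>x. (w' has_real_derivative g x * w x) (at x)"
    and "\<And>x. \<bar>g x\<bar> \<le> K" and "w a = 0" and "w' a = 0"
  shows "w x = 0"
proof -
  define E where "E y = w y ^ 2 + w' y ^ 2" for y
  have "E x = 0"
  proof (rule gronwall_vanishing[where E = E and a = a])
    show "(E has_real_derivative 2 * w y * w' y * (1 + g y)) (at y)" for y
      unfolding E_def[abs_def]
      by (auto intro!: derivative_eq_intros assms(1,2) simp: algebra_simps power2_eq_square)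
    show "\<bar>2 * w y * w' y * (1 + g y)\<bar> \<le> (1 + K) * E y" for y
    proof -
      have "2 * \<bar>w y\<bar> * \<bar>w' y\<bar> \<le> E y"
        using sum_squares_bound[of "\<bar>w y\<bar>" "\<bar>w' y\<bar>"] by (simp add: E_def power2_eq_square)
      moreover have "\<bar>1 + g y\<bar> \<le> 1 + K"
        using assms(3)[of y] by linarith
      ultimately have "2 * \<bar>w y\<bar> * \<bar>w' y\<bar> * \<bar>1 + g y\<bar> \<le> E y * (1 + K)"
        by (intro mult_mono) (auto simp: E_def)
      then show ?thesis by (simp add: abs_mult mult.commute)
    qed
  qed (simp_all add: E_def assms(4,5))
  then show ?thesis by (simp add: E_def)
qed

locale soliton =
  fixes p :: real
  assumes p_gt_1: "1 < p"
begin

definition "\<beta> = (p - 1) / 2"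
definition "\<alpha> = 2 / (p - 1)"
definition "\<kappa> = p * (p + 1) / 2"
definition "A = ((p + 1) / 2) powr (1 / (p - 1))"

definition "C x = cosh (\<beta> * x)"
definition "S x = sinh (\<beta> * x)"
definition "T x = tanh (\<beta> * x)"
definition "P x = C x powr - \<alpha>"
definition "V x = \<kappa> * (1 - T x ^ 2)"

lemma \<beta>_pos: "\<beta> > 0"
  using p_gt_1 by (simp add: \<beta>_def)

lemma \<alpha>_pos: "\<alpha> > 0"
  using p_gt_1 by (simp add: \<alpha>_def)

lemma \<alpha>_\<beta>: "\<alpha> * \<beta> = 1"
  using p_gt_1 by (simp add: \<alpha>_def \<beta>_def)

lemma \<kappa>_eq: "\<kappa> = (1 + \<beta>) * (1 + 2 * \<beta>)"
  by (simp add: \<kappa>_def \<beta>_def field_simps)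

lemma A_pos: "A > 0"
  using p_gt_1 by (simp add: A_def)

lemma C_ge_1: "C x \<ge> 1"
  by (simp add: C_def cosh_real_ge_1)

lemma C_pos: "C x > 0"
  by (simp add: C_def)

lemma C_nonzero: "C x \<noteq> 0"
  using C_pos[of x] by simp

lemma C_sq: "C x ^ 2 = 1 + S x ^ 2"
  using cosh_square_eq[of "\<beta> * x"] by (simp add: C_def S_def)

lemma S_eq_0_iff: "S x = 0 \<longleftrightarrow> x = 0"
  using \<beta>_pos by (simp add: S_def)

lemma T_eq: "T x = S x / C x"
  by (simp add: T_def S_def C_def tanh_def)

lemma one_minus_T_sq: "1 - T x ^ 2 = 1 / C x ^ 2"
proof -
  have "1 - T x ^ 2 = (C x ^ 2 - S x ^ 2) / C x ^ 2"
    using C_pos[of x] by (simp add: T_eq power_divide field_simps)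
  then show ?thesis by (simp add: C_sq)
qed

lemma C_0 [simp]: "C 0 = 1" and T_0 [simp]: "T 0 = 0" and P_0 [simp]: "P 0 = 1"
  by (simp_all add: C_def T_def P_def)

lemma C_even: "C (- x) = C x" and T_odd: "T (- x) = - T x" and P_even: "P (- x) = P x"
  by (simp_all add: C_def T_def P_def)

lemma P_pos: "P x > 0"
  using C_pos[of x] by (simp add: P_def)

lemma DERIV_C: "(C has_real_derivative \<beta> * S x) (at x)"
  unfolding C_def S_def by (auto intro!: derivative_eq_intros)

lemma DERIV_S: "(S has_real_derivative \<beta> * C x) (at x)"
  unfolding C_def S_def by (auto intro!: derivative_eq_intros)

lemma DERIV_T: "(T has_real_derivative \<beta> * (1 - T x ^ 2)) (at x)"
  unfolding T_def by (auto intro!: derivative_eq_intros)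

lemma S_odd: "S (- x) = - S x"
  by (simp add: S_def)

lemma isCont_C: "isCont C x"
  using DERIV_C by (rule DERIV_isCont)

lemma isCont_S: "isCont S x"
  using DERIV_S by (rule DERIV_isCont)

lemma C_powr_minus_2: "C x powr (r - 2) = C x powr r / C x ^ 2"
  using C_pos[of x] by (simp add: powr_diff)

lemma DERIV_C_powr: "((\<lambda>x. C x powr r) has_real_derivative r * \<beta> * T x * C x powr r) (at x)"
proof -
  have "((\<lambda>x. C x powr r) has_real_derivative r * C x powr (r - 1) * (\<beta> * S x)) (at x)"
    by (auto intro!: derivative_eq_intros DERIV_C simp: C_pos)
  moreover have "r * C x powr (r - 1) * (\<beta> * S x) = r * \<beta> * T x * C x powr r"
    using C_pos[of x] by (simp add: powr_diff T_eq)
  ultimately show ?thesis by simp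
qed

lemma DERIV_P: "(P has_real_derivative - P x * T x) (at x)"
  using DERIV_C_powr[of "- \<alpha>" x] \<alpha>_\<beta> unfolding P_def[abs_def] by (simp add: algebra_simps)

lemma phi_eq: "phi p x = A * P x"
proof -
  have "sech (\<beta> * x) powr \<alpha> = C x powr - \<alpha>"
    by (simp add: sech_def C_def powr_divide powr_minus_divide)
  then show ?thesis by (simp add: phi_def A_def P_def \<beta>_def \<alpha>_def)
qed

lemma potential_eq: "p * phi p x powr (p - 1) = V x"
proof -
  have "phi p x powr (p - 1) = A powr (p - 1) * P x powr (p - 1)"
    using P_pos[of x] by (simp add: phi_eq powr_mult A_def)
  also have "A powr (p - 1) = (p + 1) / 2"
    using p_gt_1 by (simp add: A_def powr_powr)
  also have "P x powr (p - 1) = C x powr (- \<alpha> * (p - 1))"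
    by (simp add: P_def powr_powr)
  also have "- \<alpha> * (p - 1) = - 2"
    using p_gt_1 by (simp add: \<alpha>_def field_simps)
  also have "C x powr - 2 = 1 / C x ^ 2"
    using C_pos[of x] by (simp add: powr_minus_divide)
  finally show ?thesis by (simp add: V_def one_minus_T_sq \<kappa>_def)
qed

lemma V_bounds: "0 \<le> V x" "V x \<le> \<kappa>"
proof -
  have "0 \<le> 1 - T x ^ 2" "1 - T x ^ 2 \<le> 1"
    using C_ge_1[of x] by (simp_all add: one_minus_T_sq one_le_power)
  moreover have "0 \<le> \<kappa>"
    using p_gt_1 by (simp add: \<kappa>_def)
  ultimately show "0 \<le> V x" "V x \<le> \<kappa>"
    unfolding V_def by (simp_all add: mult_left_le)
qed

lemma DERIV_V: "(V has_real_derivative - 2 * \<kappa> * \<beta> * T x * (1 - T x ^ 2)) (at x)"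
  unfolding V_def[abs_def] by (auto intro!: derivative_eq_intros DERIV_T simp: algebra_simps)

definition integrated_sol :: "(real \<Rightarrow> real) \<Rightarrow> (real \<Rightarrow> real) \<Rightarrow> real \<Rightarrow> bool" where
  "integrated_sol u u' c \<longleftrightarrow> (\<forall>x. (u has_real_derivative u' x) (at x) \<and>
     (u' has_real_derivative (1 - V x) * u x - c) (at x))"

lemma Lsol_iff_integrated_sol: "Lsol p u \<longleftrightarrow> (\<exists>u' c. integrated_sol u u' c)"
proof
  assume L: "Lsol p u"
  let ?F = "\<lambda>y. - deriv (deriv u) y + u y - p * phi p y powr (p - 1) * u y"
  define c where "c = ?F 0"
  have "?F x = c" for x
    using L DERIV_isconst_all[of ?F x 0] by (simp add: Lsol_def c_def)
  then have dd: "deriv (deriv u) x = (1 - V x) * u x - c" for x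
    unfolding potential_eq by (simp add: algebra_simps)
  have "(u has_real_derivative deriv u x) (at x)"
    and "(deriv u has_real_derivative deriv (deriv u) x) (at x)" for x
    using L by (simp_all add: Lsol_def DERIV_deriv_iff_real_differentiable)
  then have "integrated_sol u (deriv u) c"
    unfolding dd by (simp add: integrated_sol_def)
  then show "\<exists>u' c. integrated_sol u u' c" by blast
next
  assume "\<exists>u' c. integrated_sol u u' c"
  then obtain u' c where
    u': "\<And>x. (u has_real_derivative u' x) (at x)" and
    u'': "\<And>x. (u' has_real_derivative (1 - V x) * u x - c) (at x)"
    by (auto simp: integrated_sol_def)
  have du: "deriv u = u'" and ddu: "deriv u' = (\<lambda>x. (1 - V x) * u x - c)"
    using u' u'' by (auto intro!: ext DERIV_imp_deriv)
  have "V differentiable at x" "u differentiable at x" "u' differentiable at x" for x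
    using DERIV_V u' u'' by (auto simp: real_differentiable_def)
  moreover have "(\<lambda>x. (1 - V x) * u x - c) differentiable at x" for x
    using calculation by simp
  moreover have "(\<lambda>y. - deriv (deriv u) y + u y - p * phi p y powr (p - 1) * u y) = (\<lambda>y. c)"
    by (simp add: du ddu potential_eq algebra_simps)
  ultimately show "Lsol p u"
    unfolding Lsol_def by (simp add: du ddu)
qed

lemma integrated_sol_add:
  "integrated_sol u u' c \<Longrightarrow> integrated_sol v v' d \<Longrightarrow>
     integrated_sol (\<lambda>x. u x + v x) (\<lambda>x. u' x + v' x) (c + d)"
  unfolding integrated_sol_def by (auto intro!: derivative_eq_intros simp: algebra_simps)

lemma integrated_sol_cmult:
  "integrated_sol u u' c \<Longrightarrow> integrated_sol (\<lambda>x. r * u x) (\<lambda>x. r * u' x) (r * c)"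
  unfolding integrated_sol_def by (auto intro!: derivative_eq_intros simp: algebra_simps)

lemma integrated_sol_diff:
  "integrated_sol u u' c \<Longrightarrow> integrated_sol v v' d \<Longrightarrow>
     integrated_sol (\<lambda>x. u x - v x) (\<lambda>x. u' x - v' x) (c - d)"
  using integrated_sol_add[of u u' c "\<lambda>x. - 1 * v x" "\<lambda>x. - 1 * v' x" "- 1 * d"]
    integrated_sol_cmult[of v v' d "- 1"]
  by simp

lemma integrated_sol_vanishing:
  assumes "integrated_sol w w' 0" and "w 0 = 0" and "w' 0 = 0"
  shows "w x = 0"
proof (rule linear_ode2_vanishing
    [where w = w and w' = w' and g = "\<lambda>x. 1 - V x" and K = "1 + \<kappa>" and a = 0])
  show "\<bar>1 - V y\<bar> \<le> 1 + \<kappa>" for y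
    using V_bounds[of y] by linarith
qed (use assms in \<open>auto simp: integrated_sol_def\<close>)

(* The value at 0 is the limit q_tendsto_0, making q e continuous. *)
definition "q e x = (if x = 0 then \<beta> * e else \<beta> * (C x powr (2 * e) - 1) / S x ^ 2)"

lemma q_tendsto_0: "((\<lambda>y. (C y powr (2 * e) - 1) / S y ^ 2) \<longlongrightarrow> e) (at 0)"
proof (rule lhopital)
  have ne: "\<forall>\<^sub>F y in at 0. y \<noteq> (0::real)"
    by (simp add: eventually_at_filter)
  have "((\<lambda>y. C y powr (2 * e) - 1) \<longlongrightarrow> C 0 powr (2 * e) - 1) (at 0)"
    unfolding C_def by (auto intro!: tendsto_eq_intros)
  then show "((\<lambda>y. C y powr (2 * e) - 1) \<longlongrightarrow> 0) (at 0)"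
    by simp
  have "((\<lambda>y. S y ^ 2) \<longlongrightarrow> S 0 ^ 2) (at 0)"
    unfolding S_def by (auto intro!: tendsto_eq_intros)
  then show "((\<lambda>y. S y ^ 2) \<longlongrightarrow> 0) (at 0)"
    by (simp add: S_def)
  show "\<forall>\<^sub>F y in at 0. S y ^ 2 \<noteq> 0" "\<forall>\<^sub>F y in at 0. 2 * S y * (\<beta> * C y) \<noteq> 0"
    using ne \<beta>_pos by (auto elim!: eventually_mono simp: S_eq_0_iff C_nonzero)
  show "\<forall>\<^sub>F y in at 0. ((\<lambda>y. C y powr (2 * e) - 1) has_real_derivative
      2 * e * \<beta> * T y * C y powr (2 * e)) (at y)"
    by (intro always_eventually allI DERIV_cong[OF DERIV_diff[OF DERIV_C_powr DERIV_const]]) simp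
  show "\<forall>\<^sub>F y in at 0. ((\<lambda>y. S y ^ 2) has_real_derivative 2 * S y * (\<beta> * C y)) (at y)"
    by (auto intro!: always_eventually derivative_eq_intros DERIV_S)
  have "((\<lambda>y. e * C y powr (2 * e) / C y ^ 2) \<longlongrightarrow> e * C 0 powr (2 * e) / C 0 ^ 2) (at 0)"
    unfolding C_def by (auto intro!: tendsto_eq_intros)
  then have "((\<lambda>y. e * C y powr (2 * e) / C y ^ 2) \<longlongrightarrow> e) (at 0)"
    by simp
  then show "((\<lambda>y. 2 * e * \<beta> * T y * C y powr (2 * e) / (2 * S y * (\<beta> * C y))) \<longlongrightarrow> e) (at 0)"
  proof (rule Lim_transform_eventually)
    show "\<forall>\<^sub>F y in at 0. e * C y powr (2 * e) / C y ^ 2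
        = 2 * e * \<beta> * T y * C y powr (2 * e) / (2 * S y * (\<beta> * C y))"
      using ne by eventually_elim
        (use \<beta>_pos in \<open>simp add: T_eq S_eq_0_iff C_nonzero field_simps power2_eq_square\<close>)
  qed
qed

lemma isCont_q: "isCont (q e) x"
proof (cases "x = 0")
  case True
  have "((\<lambda>y. \<beta> * ((C y powr (2 * e) - 1) / S y ^ 2)) \<longlongrightarrow> \<beta> * e) (at 0)"
    by (intro tendsto_intros q_tendsto_0)
  then have "(q e \<longlongrightarrow> \<beta> * e) (at 0)"
    by (rule Lim_transform_eventually) (auto simp: eventually_at_filter q_def)
  then show ?thesis
    using True by (simp add: isCont_def q_def)
next
  case False
  have "\<forall>\<^sub>F y in nhds x. q e y = \<beta> * (C y powr (2 * e) - 1) / S y ^ 2"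
    using t1_space_nhds[OF False] by eventually_elim (simp add: q_def)
  moreover have "isCont (\<lambda>y. \<beta> * (C y powr (2 * e) - 1) / S y ^ 2) x"
    using False C_pos[of x] by (auto intro!: continuous_intros isCont_C isCont_S simp: S_eq_0_iff)
  ultimately show ?thesis
    by (simp add: isCont_cong)
qed

lemma q_even: "q e (- x) = q e x"
  by (simp add: q_def C_even S_odd)

definition \<Psi> :: "real \<Rightarrow> real \<Rightarrow> real" where
  "\<Psi> e x = (LBINT y=0..x. q e y)"

lemma DERIV_\<Psi>: "(\<Psi> e has_real_derivative q e x) (at x)"
  unfolding \<Psi>_def[abs_def] zero_ereal_def
  by (rule DERIV_interval_integral) (simp add: continuous_at_imp_continuous_on isCont_q)

lemma \<Psi>_0 [simp]: "\<Psi> e 0 = 0"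
  by (simp add: \<Psi>_def zero_ereal_def)

lemma \<Psi>_odd: "\<Psi> e (- x) = - \<Psi> e x"
  by (rule antiderivative_of_even_is_odd[OF DERIV_\<Psi> q_even \<Psi>_0])

(* Only continuity of q e at 0 is known, but since T 0 = 0 the product M e is differentiable there. *)
definition "M e x = T x * q e x"

lemma T_mult_M: "T x * M e x = \<beta> * (C x powr (2 * e - 2) - 1 + T x ^ 2)"
proof (cases "x = 0")
  case False
  have "T x * M e x = \<beta> * (C x powr (2 * e) / C x ^ 2 - 1 / C x ^ 2)"
    using False C_pos[of x]
    by (simp add: M_def q_def T_eq S_eq_0_iff power2_eq_square field_simps)
  also have "\<dots> = \<beta> * (C x powr (2 * e - 2) - (1 - T x ^ 2))"
    by (simp only: C_powr_minus_2 one_minus_T_sq)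
  finally show ?thesis
    by simp
qed (simp add: M_def)

lemma DERIV_M: "(M e has_real_derivative
    - 2 * \<beta> * T x * M e x + 2 * e * \<beta>\<^sup>2 * C x powr (2 * e - 2) - \<beta> * q e x * (1 - T x ^ 2)) (at x)"
proof (cases "x = 0")
  case True
  have "((\<lambda>y. T y * q e y) has_real_derivative e * \<beta>\<^sup>2) (at 0)"
    by (rule DERIV_cong[OF DERIV_mult_vanishing[OF T_0 DERIV_T isCont_q]])
      (simp add: q_def power2_eq_square)
  then show ?thesis
    using True by (simp add: M_def[abs_def] q_def power2_eq_square)
next
  case False
  define R where "R y = C y powr (2 * e)" for y
  have DERIV_R: "(R has_real_derivative 2 * e * \<beta> * T y * R y) (at y)" for y
    unfolding R_def[abs_def] by (rule DERIV_C_powr)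
  have M_eq: "M e y = \<beta> * (R y - 1) / (C y * S y)" if "y \<noteq> 0" for y
    using that C_nonzero[of y] by (simp add: M_def q_def R_def T_eq S_eq_0_iff power2_eq_square)
  have q_x: "q e x = \<beta> * (R x - 1) / S x ^ 2"
    using False by (simp add: q_def R_def)
  have "((\<lambda>y. \<beta> * (R y - 1) / (C y * S y)) has_real_derivative
      - 2 * \<beta> * T x * (T x * q e x) + 2 * e * \<beta>\<^sup>2 * (R x / C x ^ 2) - \<beta> * q e x * (1 - T x ^ 2)) (at x)"
    unfolding q_x using C_nonzero[of x] False
    by (auto intro!: derivative_eq_intros DERIV_R DERIV_C DERIV_S
        simp: T_eq S_eq_0_iff power2_eq_square field_simps)
  then have "(M e has_real_derivative
      - 2 * \<beta> * T x * (T x * q e x) + 2 * e * \<beta>\<^sup>2 * (R x / C x ^ 2) - \<beta> * q e x * (1 - T x ^ 2)) (at x)"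
    by (rule has_field_derivative_transform_within_open[where S = "- {0}"]) (use False M_eq in auto)
  then show ?thesis
    by (simp add: M_def R_def C_powr_minus_2)
qed

definition "h e x = P x * (T x * \<Psi> e x - 1)"
definition "dh e x = P x * ((\<beta> * (1 - T x ^ 2) - T x ^ 2) * \<Psi> e x + T x + M e x)"

lemma DERIV_h: "(h e has_real_derivative dh e x) (at x)"
  unfolding h_def[abs_def]
  by (auto intro!: derivative_eq_intros DERIV_P DERIV_T DERIV_\<Psi>
      simp: dh_def M_def algebra_simps power2_eq_square)

lemma DERIV_dh: "(dh e has_real_derivative
    (1 - V x) * h e x + 2 * \<beta> * (e * \<beta> - 1 - \<beta>) * P x * C x powr (2 * e - 2)) (at x)"
proof -
  have "(dh e has_real_derivative
      - P x * T x * ((\<beta> * (1 - T x ^ 2) - T x ^ 2) * \<Psi> e x + T x + M e x)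
      + P x * ((- 2 * \<beta> - 2) * T x * (\<beta> * (1 - T x ^ 2)) * \<Psi> e x
        + (\<beta> * (1 - T x ^ 2) - T x ^ 2) * q e x + \<beta> * (1 - T x ^ 2)
        + (- 2 * \<beta> * T x * M e x + 2 * e * \<beta>\<^sup>2 * C x powr (2 * e - 2)
           - \<beta> * q e x * (1 - T x ^ 2)))) (at x)"
    unfolding dh_def[abs_def]
    by (auto intro!: derivative_eq_intros DERIV_P DERIV_T DERIV_\<Psi> DERIV_M simp: algebra_simps)
  moreover
  have "T x * (T x * q e x) = \<beta> * (C x powr (2 * e - 2) - 1 + T x ^ 2)"
    using T_mult_M[of x e] by (simp add: M_def)
  then have "- P x * T x * ((\<beta> * (1 - T x ^ 2) - T x ^ 2) * \<Psi> e x + T x + M e x)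
      + P x * ((- 2 * \<beta> - 2) * T x * (\<beta> * (1 - T x ^ 2)) * \<Psi> e x
        + (\<beta> * (1 - T x ^ 2) - T x ^ 2) * q e x + \<beta> * (1 - T x ^ 2)
        + (- 2 * \<beta> * T x * M e x + 2 * e * \<beta>\<^sup>2 * C x powr (2 * e - 2)
           - \<beta> * q e x * (1 - T x ^ 2)))
    = (1 - V x) * h e x + 2 * \<beta> * (e * \<beta> - 1 - \<beta>) * P x * C x powr (2 * e - 2)"
    using \<kappa>_eq unfolding V_def h_def M_def by algebra
  ultimately show ?thesis
    by simp
qed

lemma h_0: "h e 0 = - 1" and dh_0: "dh e 0 = 0"
  by (simp_all add: h_def dh_def M_def)

lemma h_even: "h e (- x) = h e x"
  by (simp add: h_def P_even T_odd \<Psi>_odd)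

definition "\<nu> = (p + 1) / (p - 1)"
definition "\<mu> = p / (p - 1)"

lemma \<nu>_eq: "\<nu> = 1 + \<alpha>" and \<mu>_eq: "\<mu> = 1 + \<alpha> / 2"
proof -
  have "p - 1 \<noteq> 0"
    using p_gt_1 by simp
  then show "\<nu> = 1 + \<alpha>" "\<mu> = 1 + \<alpha> / 2"
    by (simp_all add: \<nu>_def \<mu>_def \<alpha>_def field_simps)
qed

lemma integrated_sol_h_\<nu>: "integrated_sol (h \<nu>) (dh \<nu>) 0"
proof -
  have "\<nu> * \<beta> - 1 - \<beta> = 0"
    using p_gt_1 by (simp add: \<nu>_def \<beta>_def field_simps)
  then show ?thesis
    using DERIV_h DERIV_dh[of \<nu>] by (simp add: integrated_sol_def)
qed

lemma integrated_sol_h_\<mu>: "integrated_sol (h \<mu>) (dh \<mu>) \<beta>"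
proof -
  have "2 * \<beta> * (\<mu> * \<beta> - 1 - \<beta>) = - \<beta>"
    using p_gt_1 by (simp add: \<mu>_def \<beta>_def field_simps)
  moreover have "P x * C x powr (2 * \<mu> - 2) = 1" for x
  proof -
    have "2 * \<mu> - 2 = \<alpha>"
      by (simp add: \<mu>_eq)
    then show ?thesis
      using C_pos[of x] by (simp add: P_def powr_minus)
  qed
  ultimately show ?thesis
    using DERIV_h DERIV_dh[of \<mu>] by (simp add: integrated_sol_def mult.assoc)
qed

definition "h2 x = \<alpha> * h \<mu> x"

lemma integrated_sol_h2: "integrated_sol h2 (\<lambda>x. \<alpha> * dh \<mu> x) 1"
  using integrated_sol_cmult[OF integrated_sol_h_\<mu>, of \<alpha>] \<alpha>_\<beta>
  unfolding h2_def[abs_def] by simp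

lemma h2_even: "h2 (- x) = h2 x"
  by (simp add: h2_def h_even)

definition "dphi x = - A * P x * T x"
definition "d2phi x = - A * P x * (\<beta> * (1 - T x ^ 2) - T x ^ 2)"

lemma deriv_phi: "deriv (phi p) = dphi"
proof
  fix x
  have "((\<lambda>x. A * P x) has_real_derivative dphi x) (at x)"
    unfolding dphi_def by (auto intro!: derivative_eq_intros DERIV_P)
  then show "deriv (phi p) x = dphi x"
    by (simp add: phi_eq[abs_def] DERIV_imp_deriv)
qed

lemma integrated_sol_dphi: "integrated_sol dphi d2phi 0"
  unfolding integrated_sol_def dphi_def[abs_def] d2phi_def[abs_def] V_def \<kappa>_eq
  by (auto intro!: derivative_eq_intros DERIV_P DERIV_T simp: algebra_simps power2_eq_square)

lemma dphi_odd: "dphi (- x) = - dphi x"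
  by (simp add: dphi_def P_even T_odd)

lemma integrated_sol_span:
  "integrated_sol (\<lambda>x. c1 * dphi x + c2 * h2 x + c3 * h \<nu> x)
     (\<lambda>x. c1 * d2phi x + c2 * (\<alpha> * dh \<mu> x) + c3 * dh \<nu> x) c2"
  using integrated_sol_add[OF integrated_sol_add[OF integrated_sol_cmult[OF integrated_sol_dphi]
      integrated_sol_cmult[OF integrated_sol_h2]] integrated_sol_cmult[OF integrated_sol_h_\<nu>]]
  by simp

lemma Lsol_iff_span:
  "Lsol p u \<longleftrightarrow> (\<exists>c1 c2 c3. u = (\<lambda>x. c1 * deriv (phi p) x + c2 * h2 x + c3 * h \<nu> x))"
proof
  assume "Lsol p u"
  then obtain u' c where u: "integrated_sol u u' c"
    by (auto simp: Lsol_iff_integrated_sol)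
  define c1 where "c1 = u' 0 / d2phi 0"
  define c3 where "c3 = c * h2 0 - u 0"
  have "d2phi 0 \<noteq> 0"
    using A_pos \<beta>_pos by (simp add: d2phi_def)
  define w where "w x = u x - (c1 * dphi x + c * h2 x + c3 * h \<nu> x)" for x
  define w' where "w' x = u' x - (c1 * d2phi x + c * (\<alpha> * dh \<mu> x) + c3 * dh \<nu> x)" for x
  have "integrated_sol w w' 0"
    using integrated_sol_diff[OF u integrated_sol_span[of c1 c c3]]
    unfolding w_def[abs_def] w'_def[abs_def] by simp
  moreover have "w 0 = 0" and "w' 0 = 0"
    using \<open>d2phi 0 \<noteq> 0\<close> by (simp_all add: w_def w'_def c1_def c3_def dphi_def h_0 dh_0 h2_def)
  ultimately have "w x = 0" for x
    by (rule integrated_sol_vanishing)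
  then have "u = (\<lambda>x. c1 * deriv (phi p) x + c * h2 x + c3 * h \<nu> x)"
    by (simp add: w_def deriv_phi fun_eq_iff)
  then show "\<exists>c1 c2 c3. u = (\<lambda>x. c1 * deriv (phi p) x + c2 * h2 x + c3 * h \<nu> x)"
    by blast
next
  assume "\<exists>c1 c2 c3. u = (\<lambda>x. c1 * deriv (phi p) x + c2 * h2 x + c3 * h \<nu> x)"
  then obtain c1 c2 c3 where "u = (\<lambda>x. c1 * dphi x + c2 * h2 x + c3 * h \<nu> x)"
    by (auto simp: deriv_phi)
  then have "integrated_sol u (\<lambda>x. c1 * d2phi x + c2 * (\<alpha> * dh \<mu> x) + c3 * dh \<nu> x) c2"
    using integrated_sol_span by simp
  then show "Lsol p u"
    by (auto simp: Lsol_iff_integrated_sol)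
qed

lemma C_at_top: "filterlim C at_top at_top"
  unfolding C_def
  by (rule filterlim_compose[OF cosh_real_at_top
        filterlim_tendsto_pos_mult_at_top[OF tendsto_const \<beta>_pos filterlim_ident]])

lemma T_at_top: "(T \<longlongrightarrow> 1) at_top"
  unfolding T_def
  by (rule filterlim_compose[OF tanh_real_at_top
        filterlim_tendsto_pos_mult_at_top[OF tendsto_const \<beta>_pos filterlim_ident]])

lemma C_powr_at_top:
  assumes "0 < r"
  shows "filterlim (\<lambda>x. C x powr r) at_top at_top"
proof -
  have "filterlim (\<lambda>x. inverse (C x powr - r)) at_top at_top"
    using assms by (intro filterlim_inverse_at_top tendsto_neg_powr C_at_top) (auto simp: C_nonzero)
  then show ?thesis
    by (simp add: powr_minus)
qed

lemma P_at_top: "(P \<longlongrightarrow> 0) at_top"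
  unfolding P_def[abs_def] using \<alpha>_pos by (intro tendsto_neg_powr C_at_top) simp

lemma dphi_at_top: "(dphi \<longlongrightarrow> 0) at_top"
  using tendsto_mult[OF tendsto_mult[OF tendsto_const P_at_top] T_at_top, of "- A"]
  by (simp add: dphi_def[abs_def])

lemma dphi_at_bot: "(dphi \<longlongrightarrow> 0) at_bot"
  using tendsto_minus[OF dphi_at_top]
  by (simp add: filterlim_at_bot_mirror dphi_odd)

lemma \<Psi>_ratio_at_top:
  assumes "1 < e"
  shows "((\<lambda>x. \<Psi> e x / C x powr (2 * e - 2)) \<longlongrightarrow> 1 / (2 * e - 2)) at_top"
proof (rule lhospital_at_top_at_top)
  have pos: "\<forall>\<^sub>F x in at_top. 0 < (x::real)"
    by (rule eventually_gt_at_top)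
  show "filterlim (\<lambda>x. C x powr (2 * e - 2)) at_top at_top"
    using assms by (intro C_powr_at_top) simp
  show "\<forall>\<^sub>F x in at_top. (2 * e - 2) * \<beta> * T x * C x powr (2 * e - 2) \<noteq> 0"
    using pos by eventually_elim (use assms \<beta>_pos in \<open>simp add: T_def C_nonzero\<close>)
  show "\<forall>\<^sub>F x in at_top. (\<Psi> e has_real_derivative q e x) (at x)"
    by (simp add: DERIV_\<Psi>)
  show "\<forall>\<^sub>F x in at_top. ((\<lambda>x. C x powr (2 * e - 2)) has_real_derivative
      (2 * e - 2) * \<beta> * T x * C x powr (2 * e - 2)) (at x)"
    by (simp add: DERIV_C_powr)
  have "((\<lambda>x. (1 - C x powr (- 2 * e)) / ((2 * e - 2) * T x ^ 3))
      \<longlongrightarrow> (1 - 0) / ((2 * e - 2) * 1 ^ 3)) at_top"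
    using assms by (intro tendsto_intros T_at_top tendsto_neg_powr[OF _ C_at_top]) auto
  then have "((\<lambda>x. (1 - C x powr (- 2 * e)) / ((2 * e - 2) * T x ^ 3)) \<longlongrightarrow> 1 / (2 * e - 2)) at_top"
    by simp
  then show "((\<lambda>x. q e x / ((2 * e - 2) * \<beta> * T x * C x powr (2 * e - 2)))
      \<longlongrightarrow> 1 / (2 * e - 2)) at_top"
  proof (rule Lim_transform_eventually)
    show "\<forall>\<^sub>F x in at_top. (1 - C x powr (- 2 * e)) / ((2 * e - 2) * T x ^ 3)
        = q e x / ((2 * e - 2) * \<beta> * T x * C x powr (2 * e - 2))"
      using pos
    proof eventually_elim
      case (elim x)
      then have "S x \<noteq> 0" "C x powr (2 * e) > 0"
        using C_pos[of x] by (simp_all add: S_eq_0_iff)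
      then show ?case
        using elim assms \<beta>_pos C_pos[of x]
        by (simp add: q_def T_eq C_powr_minus_2 powr_minus_divide field_simps power2_eq_square
            power3_eq_cube)
    qed
  qed
qed

lemma h_eq_ratio: "h e x = T x * (\<Psi> e x / C x powr (2 * e - 2)) * C x powr (2 * e - 2 - \<alpha>) - P x"
proof -
  have "C x powr (2 * e - 2 - \<alpha>) = C x powr (2 * e - 2) * P x"
    unfolding P_def powr_add[symmetric] by simp
  moreover have "C x powr (2 * e - 2) > 0"
    using C_pos[of x] by simp
  ultimately show ?thesis
    by (simp add: h_def field_simps)
qed

lemma h2_at_top: "(h2 \<longlongrightarrow> 1) at_top"
proof -
  have "1 < \<mu>" and \<mu>_\<alpha>: "2 * \<mu> - 2 = \<alpha>"
    using \<alpha>_pos by (simp_all add: \<mu>_eq)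
  have "((\<lambda>x. \<alpha> * (T x * (\<Psi> \<mu> x / C x powr (2 * \<mu> - 2)) - P x))
      \<longlongrightarrow> \<alpha> * (1 * (1 / (2 * \<mu> - 2)) - 0)) at_top"
    by (intro tendsto_intros T_at_top \<Psi>_ratio_at_top \<open>1 < \<mu>\<close> P_at_top)
  moreover have "h2 = (\<lambda>x. \<alpha> * (T x * (\<Psi> \<mu> x / C x powr (2 * \<mu> - 2)) - P x))"
    using C_nonzero by (simp add: fun_eq_iff h2_def h_eq_ratio[of \<mu>] \<mu>_\<alpha>)
  ultimately show ?thesis
    using \<alpha>_pos by (simp add: \<mu>_\<alpha>)
qed

lemma h_\<nu>_at_top: "filterlim (h \<nu>) at_top at_top"
proof -
  have "1 < \<nu>" and \<nu>_\<alpha>: "2 * \<nu> - 2 - \<alpha> = \<alpha>"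
    using \<alpha>_pos by (simp_all add: \<nu>_eq)
  have "((\<lambda>x. T x * (\<Psi> \<nu> x / C x powr (2 * \<nu> - 2))) \<longlongrightarrow> 1 * (1 / (2 * \<nu> - 2))) at_top"
    by (intro tendsto_intros T_at_top \<Psi>_ratio_at_top \<open>1 < \<nu>\<close>)
  then have "filterlim (\<lambda>x. T x * (\<Psi> \<nu> x / C x powr (2 * \<nu> - 2)) * C x powr \<alpha>) at_top at_top"
    using \<open>1 < \<nu>\<close> by (intro filterlim_tendsto_pos_mult_at_top C_powr_at_top \<alpha>_pos) auto
  then have "filterlim (\<lambda>x. - P x + T x * (\<Psi> \<nu> x / C x powr (2 * \<nu> - 2)) * C x powr \<alpha>) at_top at_top"
    by (rule filterlim_tendsto_add_at_top[OF tendsto_minus[OF P_at_top]])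
  then show ?thesis
    by (simp add: h_eq_ratio[abs_def] \<nu>_\<alpha>)
qed

lemma h2_at_bot: "(h2 \<longlongrightarrow> 1) at_bot"
  using h2_at_top by (simp add: filterlim_at_bot_mirror h2_even)

lemma h_\<nu>_at_bot: "filterlim (h \<nu>) at_top at_bot"
  using h_\<nu>_at_top by (simp add: filterlim_at_bot_mirror h_even)

lemma no_sol_from_1_to_infinity:
  "\<not> (\<exists>u. Lsol p u \<and> (u \<longlongrightarrow> 1) at_bot \<and> filterlim (\<lambda>x. \<bar>u x\<bar>) at_top at_top)"
proof
  assume "\<exists>u. Lsol p u \<and> (u \<longlongrightarrow> 1) at_bot \<and> filterlim (\<lambda>x. \<bar>u x\<bar>) at_top at_top"
  then obtain u c1 c2 c3 where u: "u = (\<lambda>x. c1 * dphi x + c2 * h2 x + c3 * h \<nu> x)"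
    and bot: "(u \<longlongrightarrow> 1) at_bot" and top: "filterlim (\<lambda>x. \<bar>u x\<bar>) at_top at_top"
    by (auto simp: Lsol_iff_span deriv_phi)
  show False
  proof (cases "c3 = 0")
    case True
    have "((\<lambda>x. \<bar>c1 * dphi x + c2 * h2 x\<bar>) \<longlongrightarrow> \<bar>c1 * 0 + c2 * 1\<bar>) at_top"
      by (intro tendsto_intros dphi_at_top h2_at_top)
    then have "((\<lambda>x. \<bar>u x\<bar>) \<longlongrightarrow> \<bar>c2\<bar>) at_top"
      using True by (simp add: u)
    then show False
      using top by (auto dest: not_tendsto_and_filterlim_at_infinity[rotated]
          filterlim_at_top_imp_at_infinity)
  next
    case False
    have "((\<lambda>x. (u x - c1 * dphi x - c2 * h2 x) / c3) \<longlongrightarrow> (1 - c1 * 0 - c2 * 1) / c3) at_bot"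
      by (intro tendsto_intros bot dphi_at_bot h2_at_bot False)
    then have "(h \<nu> \<longlongrightarrow> (1 - c2) / c3) at_bot"
      using False by (simp add: u)
    then show False
      using h_\<nu>_at_bot by (auto dest: not_tendsto_and_filterlim_at_infinity[rotated]
          filterlim_at_top_imp_at_infinity)
  qed
qed

end

theorem mainTheorem6:
  fixes p :: real
  assumes "1 < p" and "p < 5"
  shows "(\<exists>h2 h3. Lsol p h2 \<and> Lsol p h3 \<and>
            (\<forall>x. h2 (- x) = h2 x) \<and> (\<forall>x. h3 (- x) = h3 x) \<and>
            (h2 \<longlongrightarrow> 1) at_top \<and> filterlim h3 at_top at_top \<and>
            (\<forall>u. Lsol p u \<longleftrightarrow>
               (\<exists>c1 c2 c3. u = (\<lambda>x. c1 * deriv (phi p) x + c2 * h2 x + c3 * h3 x))))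
         \<and> \<not> (\<exists>u. Lsol p u \<and> (u \<longlongrightarrow> 1) at_bot \<and> filterlim (\<lambda>x. \<bar>u x\<bar>) at_top at_top)"
proof -
  interpret soliton p
    using assms(1) by unfold_locales
  have "Lsol p h2" and "Lsol p (h \<nu>)"
    using integrated_sol_h2 integrated_sol_h_\<nu> by (auto simp: Lsol_iff_integrated_sol)
  moreover have "\<forall>u. Lsol p u \<longleftrightarrow>
      (\<exists>c1 c2 c3. u = (\<lambda>x. c1 * deriv (phi p) x + c2 * h2 x + c3 * h \<nu> x))"
    using Lsol_iff_span by blast
  ultimately show ?thesis
    using h2_even h_even h2_at_top h_\<nu>_at_top no_sol_from_1_to_infinity by blast
qed

end
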